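(* Let $P$ be a finite connected ranked poset with maximum rank $r$, and let $\sigma$ be any permutation of $\{0,1,\ldots,r\}$. Let $\mathcal{O}$ be an orbit of $\Phi_{\mathrm{row}(\sigma)}$ acting on $J(P)$. Then the distribution on $J(P)$ that is uniform on $\mathcal{O}$ and zero outside $\mathcal{O}$ is toggle-symmetric.
   Context: $P$ is ranked with rank function $\mathrm{rk}\colon P\to\mathbb{N}$ ($0$ in the image, $\mathrm{rk}(q)=\mathrm{rk}(p)+1$ when $q$ covers $p$). $J(P)$ is the set of order ideals of $P$. For $p\in P$, the toggle $\tau_p\colon J(P)\to J(P)$ sends $I$ to $I\cup\{p\}$ if $p\notin I$ and $p$ is minimal in $P\setminus I$, to $I\setminus\{p\}$ if $p\in I$ and $p$ is maximal in $I$, and to $I$ otherwise. $\tau_i$ is the composition of all $\tau_p$ with $\mathrm{rk}(p)=i$ (these commute). $\Phi_{\mathrm{row}(\sigma)}:=\tau_{\sigma(0)}\circ\tau_{\sigma(1)}\circ\cdots\circ\tau_{\sigma(r)}$. $\mathcal{T}^+_p(I)=1$ iff $p\notin I$ and $p$ minimal in $P\setminus I$; $\mathcal{T}^-_p(I)=1$ iff $p\in I$ and $p$ maximal in $I$ (else $0$). A distribution $\mu$ on $J(P)$ is toggle-symmetric if $\mathbb{E}(\mu;\mathcal{T}^+_p)=\mathbb{E}(\mu;\mathcal{T}^-_p)$ for all $p\in P$. *)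

theory Defs
  imports Complex_Main
begin

text \<open>A finite poset is modelled as a finite carrier set P inside a type of class order;
the order of the poset is the restriction of the ambient order to P.\<close>

definition covers :: "'a::order set \<Rightarrow> 'a \<Rightarrow> 'a \<Rightarrow> bool" where
  "covers P p q \<longleftrightarrow> p \<in> P \<and> q \<in> P \<and> p < q \<and> \<not> (\<exists>z\<in>P. p < z \<and> z < q)"

definition ranked :: "'a::order set \<Rightarrow> ('a \<Rightarrow> nat) \<Rightarrow> bool" where
  "ranked P rk \<longleftrightarrow> 0 \<in> rk ` P \<and> (\<forall>p q. covers P p q \<longrightarrow> rk q = rk p + 1)"

definition poset_connected :: "'a::order set \<Rightarrow> bool" where
  "poset_connected P \<longleftrightarrow>
     (\<forall>x\<in>P. \<forall>y\<in>P. (x, y) \<in> {(a, b). a \<in> P \<and> b \<in> P \<and> (a \<le> b \<or> b \<le> a)}\<^sup>*)"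

definition order_ideals :: "'a::order set \<Rightarrow> 'a set set" where
  "order_ideals P = {I. I \<subseteq> P \<and> (\<forall>x\<in>I. \<forall>y\<in>P. y \<le> x \<longrightarrow> y \<in> I)}"

definition minimal_in :: "'a::order \<Rightarrow> 'a set \<Rightarrow> bool" where
  "minimal_in p S \<longleftrightarrow> p \<in> S \<and> \<not> (\<exists>q\<in>S. q < p)"

definition maximal_in :: "'a::order \<Rightarrow> 'a set \<Rightarrow> bool" where
  "maximal_in p S \<longleftrightarrow> p \<in> S \<and> \<not> (\<exists>q\<in>S. p < q)"

definition toggle :: "'a::order set \<Rightarrow> 'a \<Rightarrow> 'a set \<Rightarrow> 'a set" where
  "toggle P p I =
     (if p \<notin> I \<and> minimal_in p (P - I) then insert p I
      else if p \<in> I \<and> maximal_in p I then I - {p}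
      else I)"

text \<open>\<tau>_i: composition of all toggles at elements of rank i (they commute).\<close>
definition rank_toggle :: "'a::order set \<Rightarrow> ('a \<Rightarrow> nat) \<Rightarrow> nat \<Rightarrow> 'a set \<Rightarrow> 'a set" where
  "rank_toggle P rk i = Finite_Set.fold (\<lambda>p f. toggle P p \<circ> f) id {p \<in> P. rk p = i}"

definition row_map :: "'a::order set \<Rightarrow> ('a \<Rightarrow> nat) \<Rightarrow> nat \<Rightarrow> (nat \<Rightarrow> nat) \<Rightarrow> 'a set \<Rightarrow> 'a set" where
  "row_map P rk r \<sigma> = foldr (\<lambda>i f. rank_toggle P rk (\<sigma> i) \<circ> f) [0..<Suc r] id"

definition orbit :: "('b \<Rightarrow> 'b) \<Rightarrow> 'b \<Rightarrow> 'b set" where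
  "orbit f x = {(f ^^ k) x | k. True}"

definition T_plus :: "'a::order set \<Rightarrow> 'a \<Rightarrow> 'a set \<Rightarrow> real" where
  "T_plus P p I = (if p \<notin> I \<and> minimal_in p (P - I) then 1 else 0)"

definition T_minus :: "'a::order set \<Rightarrow> 'a \<Rightarrow> 'a set \<Rightarrow> real" where
  "T_minus P p I = (if p \<in> I \<and> maximal_in p I then 1 else 0)"

definition expect :: "'a::order set \<Rightarrow> ('a set \<Rightarrow> real) \<Rightarrow> ('a set \<Rightarrow> real) \<Rightarrow> real" where
  "expect P \<mu> f = (\<Sum>I\<in>order_ideals P. \<mu> I * f I)"

definition toggle_symmetric :: "'a::order set \<Rightarrow> ('a set \<Rightarrow> real) \<Rightarrow> bool" where
  "toggle_symmetric P \<mu> \<longleftrightarrow> (\<forall>p\<in>P. expect P \<mu> (T_plus P p) = expect P \<mu> (T_minus P p))"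

definition uniform_on :: "'b set \<Rightarrow> 'b \<Rightarrow> real" where
  "uniform_on O' x = (if x \<in> O' then 1 / real (card O') else 0)"

end

theory Submission
  imports Defs
begin

text \<open>Fix p of rank i and split the row map as \<open>\<Phi> = A \<circ> \<tau>\<^sub>i \<circ> B\<close>, where A and B toggle the
ranks coming before and after i in \<open>\<sigma>\<close>. Toggling p adds it exactly when \<open>T\<^sup>+\<^sub>p\<close> holds and
removes it exactly when \<open>T\<^sup>-\<^sub>p\<close> holds, and membership of p is unchanged by A and B; since p
enters and leaves equally often around an orbit, \<open>\<Sum> T\<^sup>+\<^sub>p(B K) = \<Sum> T\<^sup>-\<^sub>p(B K)\<close> over the orbit.
Now \<open>T\<^sup>+\<^sub>p\<close> only sees p and its lower covers, all of rank i - 1, and that rank is toggled in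
at most one of A and B. If not in B, then \<open>T\<^sup>+\<^sub>p(K) = T\<^sup>+\<^sub>p(B K)\<close>; if not in A, then
\<open>T\<^sup>+\<^sub>p(\<Phi> K) = T\<^sup>+\<^sub>p(\<tau>\<^sub>i (B K)) = T\<^sup>-\<^sub>p(B K)\<close>, and \<open>\<Phi>\<close> permutes the orbit. Either way
\<open>\<Sum> T\<^sup>+\<^sub>p\<close> is one of the two equal sums above, and dually for \<open>T\<^sup>-\<^sub>p\<close> with rank i + 1.\<close>

lemma order_idealD:
  assumes "I \<in> order_ideals P"
  shows "I \<subseteq> P" and "x \<in> I \<Longrightarrow> y \<in> P \<Longrightarrow> y \<le> x \<Longrightarrow> y \<in> I"
  using assms unfolding order_ideals_def by auto

lemma finite_order_ideals: "finite P \<Longrightarrow> finite (order_ideals P)"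
  by (rule finite_subset[of _ "Pow P"]) (auto simp: order_ideals_def)

lemma exists_lower_cover_above:
  assumes "finite P" "q \<in> P" "p \<in> P" "q < p"
  obtains c where "covers P c p" "q \<le> c"
proof -
  obtain c where c: "c \<in> {z\<in>P. q \<le> z \<and> z < p}" "q \<le> c"
    and max: "\<forall>b\<in>{z\<in>P. q \<le> z \<and> z < p}. c \<le> b \<longrightarrow> c = b"
    using finite_has_maximal2[of "{z\<in>P. q \<le> z \<and> z < p}" q] assms by auto
  have "covers P c p"
    unfolding covers_def using c max assms(3) by (auto dest: order.strict_implies_order intro: order.trans)
  then show thesis using c(2) that by blast
qed

lemma exists_upper_cover_below:
  assumes "finite P" "q \<in> P" "p \<in> P" "p < q"
  obtains c where "covers P p c" "c \<le> q"
proof -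
  obtain c where c: "c \<in> {z\<in>P. p < z \<and> z \<le> q}" "c \<le> q"
    and min: "\<forall>b\<in>{z\<in>P. p < z \<and> z \<le> q}. b \<le> c \<longrightarrow> c = b"
    using finite_has_minimal2[of "{z\<in>P. p < z \<and> z \<le> q}" q] assms by auto
  have "covers P p c"
    unfolding covers_def using c min assms(3) by (auto dest: order.strict_implies_order intro: order.trans)
  then show thesis using c(2) that by blast
qed

lemma ranked_covers_rank: "ranked P rk \<Longrightarrow> covers P c p \<Longrightarrow> rk p = rk c + 1"
  unfolding ranked_def by blast

lemma ranked_rank_less:
  assumes "finite P" "ranked P rk" "x \<in> P" "y \<in> P" "x < y"
  shows "rk x < rk y"
  using assms(4,5)
proof (induction "card {z\<in>P. z < y}" arbitrary: y rule: less_induct)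
  case less
  obtain c where cov: "covers P c y" and "x \<le> c"
    using exists_lower_cover_above[OF assms(1,3) less.prems] .
  have "rk x \<le> rk c"
  proof (cases "x = c")
    case False
    with \<open>x \<le> c\<close> have "x < c" by simp
    have "{z\<in>P. z < c} \<subset> {z\<in>P. z < y}"
      using cov unfolding covers_def by (auto intro: order.strict_trans)
    then have "card {z\<in>P. z < c} < card {z\<in>P. z < y}"
      using assms(1) by (simp add: psubset_card_mono)
    with less.hyps cov \<open>x < c\<close> show ?thesis unfolding covers_def by fastforce
  qed simp
  then show ?case using ranked_covers_rank[OF assms(2) cov] by simp
qed

lemma toggle_mem_other: "y \<noteq> x \<Longrightarrow> y \<in> toggle P x S \<longleftrightarrow> y \<in> S"
  unfolding toggle_def by auto

lemma toggle_mem_self_cong: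
  assumes "\<And>z. z = x \<or> z < x \<or> x < z \<Longrightarrow> z \<in> S \<longleftrightarrow> z \<in> S'"
  shows "x \<in> toggle P x S \<longleftrightarrow> x \<in> toggle P x S'"
proof -
  have "minimal_in x (P - S) \<longleftrightarrow> minimal_in x (P - S')"
    and "maximal_in x S \<longleftrightarrow> maximal_in x S'"
    using assms unfolding minimal_in_def maximal_in_def by blast+
  then show ?thesis using assms[of x] unfolding toggle_def by simp
qed

lemma toggle_commute:
  assumes "\<not> x < y" "\<not> y < x"
  shows "toggle P x \<circ> toggle P y = toggle P y \<circ> toggle P x"
proof (cases "x = y")
  case False
  have "z \<in> toggle P x (toggle P y S) \<longleftrightarrow> z \<in> toggle P y (toggle P x S)" for S z
  proof -
    have "x \<in> toggle P x (toggle P y S) \<longleftrightarrow> x \<in> toggle P x S"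
      by (rule toggle_mem_self_cong) (use assms False in \<open>auto simp: toggle_mem_other\<close>)
    moreover have "y \<in> toggle P y (toggle P x S) \<longleftrightarrow> y \<in> toggle P y S"
      by (rule toggle_mem_self_cong) (use assms False in \<open>auto simp: toggle_mem_other\<close>)
    ultimately show ?thesis
      using False by (cases "z = x"; cases "z = y") (auto simp: toggle_mem_other)
  qed
  then show ?thesis by auto
qed simp

lemma toggle_order_ideal:
  assumes S: "S \<in> order_ideals P" and "x \<in> P"
  shows "toggle P x S \<in> order_ideals P"
proof -
  have "insert x S \<in> order_ideals P" if "minimal_in x (P - S)"
    using that S \<open>x \<in> P\<close> unfolding order_ideals_def minimal_in_def
    by (auto simp: order.order_iff_strict)
  moreover have "S - {x} \<in> order_ideals P" if "maximal_in x S"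
    using that S unfolding order_ideals_def maximal_in_def
    by (auto simp: order.order_iff_strict)
  ultimately show ?thesis using S unfolding toggle_def by auto
qed

lemma toggle_toggle:
  assumes S: "S \<in> order_ideals P" and "x \<in> P"
  shows "toggle P x (toggle P x S) = S"
proof (cases "x \<in> S")
  case False
  then have "maximal_in x (insert x S)"
    unfolding maximal_in_def using order_idealD(2)[OF S _ \<open>x \<in> P\<close>] less_imp_le by blast
  with False show ?thesis by (simp add: toggle_def)
next
  case True
  then have "minimal_in x (P - (S - {x}))"
    unfolding minimal_in_def using order_idealD(2)[OF S True] \<open>x \<in> P\<close> less_imp_le by blast
  with True show ?thesis by (simp add: toggle_def insert_absorb)
qed

lemma bij_betw_toggle: "x \<in> P \<Longrightarrow> bij_betw (toggle P x) (order_ideals P) (order_ideals P)"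
  by (rule bij_betw_byWitness[where f' = "toggle P x"]) (auto simp: toggle_toggle toggle_order_ideal)

lemma indicator_toggle_diff:
  "of_bool (p \<in> toggle P p X) - of_bool (p \<in> X) = T_plus P p X - T_minus P p X"
  unfolding toggle_def T_plus_def T_minus_def by auto

lemma T_plus_toggle:
  assumes X: "X \<in> order_ideals P" and "p \<in> P"
  shows "T_plus P p (toggle P p X) = T_minus P p X"
proof -
  have "minimal_in p (P - (X - {p}))" if "p \<in> X"
    unfolding minimal_in_def using that order_idealD(2)[OF X that] \<open>p \<in> P\<close> less_imp_le by blast
  then show ?thesis unfolding toggle_def T_plus_def T_minus_def by auto
qed

lemma T_minus_toggle:
  assumes "X \<in> order_ideals P" and "p \<in> P"
  shows "T_minus P p (toggle P p X) = T_plus P p X"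
  using T_plus_toggle[OF toggle_order_ideal[OF assms] \<open>p \<in> P\<close>] toggle_toggle[OF assms] by simp

lemma T_plus_order_ideal:
  assumes "finite P" and K: "K \<in> order_ideals P" and "p \<in> P"
  shows "T_plus P p K = of_bool (p \<notin> K \<and> (\<forall>c. covers P c p \<longrightarrow> c \<in> K))"
proof -
  have "q \<in> K" if "q \<in> P" "q < p" "\<forall>c. covers P c p \<longrightarrow> c \<in> K" for q
    using exists_lower_cover_above[OF \<open>finite P\<close> that(1) \<open>p \<in> P\<close> that(2)]
      order_idealD(2)[OF K] that by metis
  then have "minimal_in p (P - K) \<longleftrightarrow> p \<notin> K \<and> (\<forall>c. covers P c p \<longrightarrow> c \<in> K)"
    using \<open>p \<in> P\<close> unfolding minimal_in_def covers_def by blast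
  then show ?thesis unfolding T_plus_def by simp
qed

lemma T_minus_order_ideal:
  assumes "finite P" and K: "K \<in> order_ideals P" and "p \<in> P"
  shows "T_minus P p K = of_bool (p \<in> K \<and> (\<forall>c. covers P p c \<longrightarrow> c \<notin> K))"
proof -
  have "q \<notin> K" if "q \<in> P" "p < q" "\<forall>c. covers P p c \<longrightarrow> c \<notin> K" for q
    using exists_upper_cover_below[OF \<open>finite P\<close> that(1) \<open>p \<in> P\<close> that(2)]
      order_idealD(2)[OF K] that by (metis covers_def)
  then have "maximal_in p K \<longleftrightarrow> p \<in> K \<and> (\<forall>c. covers P p c \<longrightarrow> c \<notin> K)"
    using order_idealD(1)[OF K] unfolding maximal_in_def covers_def by blast
  then show ?thesis unfolding T_minus_def by simp
qed

lemma T_plus_cong: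
  assumes "finite P" "K \<in> order_ideals P" "K' \<in> order_ideals P" "p \<in> P"
    and "\<And>z. z = p \<or> covers P z p \<Longrightarrow> z \<in> K \<longleftrightarrow> z \<in> K'"
  shows "T_plus P p K = T_plus P p K'"
  using assms(5) by (simp add: T_plus_order_ideal[OF assms(1,2,4)] T_plus_order_ideal[OF assms(1,3,4)])

lemma T_minus_cong:
  assumes "finite P" "K \<in> order_ideals P" "K' \<in> order_ideals P" "p \<in> P"
    and "\<And>z. z = p \<or> covers P p z \<Longrightarrow> z \<in> K \<longleftrightarrow> z \<in> K'"
  shows "T_minus P p K = T_minus P p K'"
  using assms(5) by (simp add: T_minus_order_ideal[OF assms(1,2,4)] T_minus_order_ideal[OF assms(1,3,4)])

definition toggle_fold :: "'a::order set \<Rightarrow> 'a set \<Rightarrow> 'a set \<Rightarrow> 'a set" where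
  "toggle_fold P A = Finite_Set.fold (\<lambda>p f. toggle P p \<circ> f) id A"

lemma toggle_fold_insert:
  assumes "\<forall>x\<in>insert a A. \<forall>y\<in>insert a A. \<not> x < y" "finite A" "a \<notin> A"
  shows "toggle_fold P (insert a A) = toggle P a \<circ> toggle_fold P A"
proof -
  have "comp_fun_commute_on (insert a A) (\<lambda>p f. toggle P p \<circ> f)"
  proof
    fix x y assume "x \<in> insert a A" "y \<in> insert a A"
    then have "toggle P y \<circ> toggle P x = toggle P x \<circ> toggle P y"
      using toggle_commute assms(1) by blast
    then show "(\<lambda>f. toggle P y \<circ> f) \<circ> (\<lambda>f. toggle P x \<circ> f) = (\<lambda>f. toggle P x \<circ> f) \<circ> (\<lambda>f. toggle P y \<circ> f)"
      by (simp add: fun_eq_iff comp_assoc[symmetric])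
  qed
  from comp_fun_commute_on.fold_insert[OF this order_refl assms(2,3)] show ?thesis
    unfolding toggle_fold_def .
qed

lemma toggle_fold_mem:
  assumes "finite A" "\<forall>x\<in>A. \<forall>y\<in>A. \<not> x < y"
  shows "z \<in> toggle_fold P A S \<longleftrightarrow> (if z \<in> A then z \<in> toggle P z S else z \<in> S)"
  using assms
proof (induction A arbitrary: z rule: finite_induct)
  case empty
  show ?case by (simp add: toggle_fold_def)
next
  case (insert a A)
  have IH: "z \<in> toggle_fold P A S \<longleftrightarrow> (if z \<in> A then z \<in> toggle P z S else z \<in> S)" for z
    using insert by blast
  have "z \<notin> A" if "z = a \<or> z < a \<or> a < z" for z
    using that insert.hyps(2) insert.prems by auto
  then have "a \<in> toggle P a (toggle_fold P A S) \<longleftrightarrow> a \<in> toggle P a S"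
    using IH by (intro toggle_mem_self_cong) presburger
  then show ?case
    using IH[of z] insert.hyps(2)
    by (cases "z = a") (simp_all add: toggle_fold_insert[OF insert.prems insert.hyps(1,2)] toggle_mem_other)
qed

lemma bij_betw_toggle_fold:
  assumes "finite A" "\<forall>x\<in>A. \<forall>y\<in>A. \<not> x < y" "A \<subseteq> P"
  shows "bij_betw (toggle_fold P A) (order_ideals P) (order_ideals P)"
  using assms
proof (induction A rule: finite_induct)
  case empty
  show ?case unfolding toggle_fold_def fold_empty by (rule bij_betw_id)
next
  case (insert a A)
  then show ?case
    unfolding toggle_fold_insert[OF insert.prems(1) insert.hyps]
    by (intro bij_betw_trans[OF _ bij_betw_toggle]) auto
qed

lemma rank_antichain:
  assumes "finite P" "ranked P rk"
  shows "\<forall>x\<in>{p\<in>P. rk p = i}. \<forall>y\<in>{p\<in>P. rk p = i}. \<not> x < y"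
  using ranked_rank_less[OF assms] by (metis (mono_tags) mem_Collect_eq less_irrefl)

lemma rank_toggle_mem:
  assumes "finite P" "ranked P rk"
  shows "z \<in> rank_toggle P rk i S \<longleftrightarrow> (if z \<in> P \<and> rk z = i then z \<in> toggle P z S else z \<in> S)"
  unfolding rank_toggle_def toggle_fold_def[symmetric] using toggle_fold_mem[OF _ rank_antichain[OF assms]] assms(1) by simp

lemma bij_betw_rank_toggle:
  assumes "finite P" "ranked P rk"
  shows "bij_betw (rank_toggle P rk i) (order_ideals P) (order_ideals P)"
  unfolding rank_toggle_def toggle_fold_def[symmetric] using bij_betw_toggle_fold[OF _ rank_antichain[OF assms]] assms(1) by simp

definition rank_toggles :: "'a::order set \<Rightarrow> ('a \<Rightarrow> nat) \<Rightarrow> nat list \<Rightarrow> 'a set \<Rightarrow> 'a set" where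
  "rank_toggles P rk ns = foldr (\<lambda>i f. rank_toggle P rk i \<circ> f) ns id"

lemma rank_toggles_Nil [simp]: "rank_toggles P rk [] = id"
  by (simp add: rank_toggles_def)

lemma rank_toggles_Cons [simp]:
  "rank_toggles P rk (i # ns) = rank_toggle P rk i \<circ> rank_toggles P rk ns"
  by (simp add: rank_toggles_def)

lemma rank_toggles_append:
  "rank_toggles P rk (ms @ ns) = rank_toggles P rk ms \<circ> rank_toggles P rk ns"
  by (induction ms) (simp_all add: comp_assoc)

lemma row_map_eq_rank_toggles: "row_map P rk r \<sigma> = rank_toggles P rk (map \<sigma> [0..<Suc r])"
  unfolding row_map_def rank_toggles_def by (simp add: foldr_map comp_def)

lemma bij_betw_rank_toggles:
  assumes "finite P" "ranked P rk"
  shows "bij_betw (rank_toggles P rk ns) (order_ideals P) (order_ideals P)"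
proof (induction ns)
  case Nil
  show ?case by (simp only: rank_toggles_Nil bij_betw_id)
next
  case (Cons i ns)
  show ?case
    unfolding rank_toggles_Cons by (rule bij_betw_trans[OF Cons.IH bij_betw_rank_toggle[OF assms]])
qed

lemma rank_toggles_mem_other:
  assumes "finite P" "ranked P rk" "rk z \<notin> set ns"
  shows "z \<in> rank_toggles P rk ns S \<longleftrightarrow> z \<in> S"
  using assms(3) by (induction ns) (simp_all add: rank_toggle_mem[OF assms(1,2)])

lemma T_plus_rank_toggles:
  assumes "finite P" "ranked P rk" "K \<in> order_ideals P" "p \<in> P"
    and "rk p \<notin> set ns" "rk p - 1 \<notin> set ns"
  shows "T_plus P p (rank_toggles P rk ns K) = T_plus P p K"
proof (rule T_plus_cong[OF assms(1) _ assms(3,4)])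
  show "rank_toggles P rk ns K \<in> order_ideals P"
    using bij_betw_apply[OF bij_betw_rank_toggles[OF assms(1,2)] assms(3)] .
  fix z assume "z = p \<or> covers P z p"
  then have "rk z \<notin> set ns" using assms(5,6) ranked_covers_rank[OF assms(2)] by force
  then show "z \<in> rank_toggles P rk ns K \<longleftrightarrow> z \<in> K" by (rule rank_toggles_mem_other[OF assms(1,2)])
qed

lemma T_minus_rank_toggles:
  assumes "finite P" "ranked P rk" "K \<in> order_ideals P" "p \<in> P"
    and "rk p \<notin> set ns" "rk p + 1 \<notin> set ns"
  shows "T_minus P p (rank_toggles P rk ns K) = T_minus P p K"
proof (rule T_minus_cong[OF assms(1) _ assms(3,4)])
  show "rank_toggles P rk ns K \<in> order_ideals P"
    using bij_betw_apply[OF bij_betw_rank_toggles[OF assms(1,2)] assms(3)] .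
  fix z assume "z = p \<or> covers P p z"
  then have "rk z \<notin> set ns" using assms(5,6) ranked_covers_rank[OF assms(2)] by force
  then show "z \<in> rank_toggles P rk ns K \<longleftrightarrow> z \<in> K" by (rule rank_toggles_mem_other[OF assms(1,2)])
qed

lemma rank_toggle_mem_near:
  assumes "finite P" "ranked P rk" "p \<in> P" "z = p \<or> covers P z p \<or> covers P p z"
  shows "z \<in> rank_toggle P rk (rk p) K \<longleftrightarrow> z \<in> toggle P p K"
proof (cases "z = p")
  case False
  with assms(4) have "rk z \<noteq> rk p" using ranked_covers_rank[OF assms(2)] by force
  with False show ?thesis by (simp add: rank_toggle_mem[OF assms(1,2)] toggle_mem_other)
qed (simp add: rank_toggle_mem[OF assms(1,2)] assms(3))

lemma T_plus_rank_toggle: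
  assumes "finite P" "ranked P rk" "K \<in> order_ideals P" "p \<in> P"
  shows "T_plus P p (rank_toggle P rk (rk p) K) = T_minus P p K"
proof -
  have "T_plus P p (rank_toggle P rk (rk p) K) = T_plus P p (toggle P p K)"
    using rank_toggle_mem_near[OF assms(1,2,4)]
    by (intro T_plus_cong[OF assms(1) _ toggle_order_ideal[OF assms(3,4)] assms(4)]
        bij_betw_apply[OF bij_betw_rank_toggle[OF assms(1,2)] assms(3)]) blast
  then show ?thesis using T_plus_toggle[OF assms(3,4)] by simp
qed

lemma T_minus_rank_toggle:
  assumes "finite P" "ranked P rk" "K \<in> order_ideals P" "p \<in> P"
  shows "T_minus P p (rank_toggle P rk (rk p) K) = T_plus P p K"
proof -
  have "T_minus P p (rank_toggle P rk (rk p) K) = T_minus P p (toggle P p K)"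
    using rank_toggle_mem_near[OF assms(1,2,4)]
    by (intro T_minus_cong[OF assms(1) _ toggle_order_ideal[OF assms(3,4)] assms(4)]
        bij_betw_apply[OF bij_betw_rank_toggle[OF assms(1,2)] assms(3)]) blast
  then show ?thesis using T_minus_toggle[OF assms(3,4)] by simp
qed

lemma sum_T_plus_eq_sum_T_minus_at_toggle:
  fixes Orb :: "'a::order set set"
  assumes fin: "finite P" and rkd: "ranked P rk" and "p \<in> P"
    and perm: "bij_betw (rank_toggles P rk (as @ rk p # bs)) Orb Orb"
    and "rk p \<notin> set as" "rk p \<notin> set bs"
  shows "(\<Sum>K\<in>Orb. T_plus P p (rank_toggles P rk bs K))
    = (\<Sum>K\<in>Orb. T_minus P p (rank_toggles P rk bs K))"
proof -
  define B where "B = rank_toggles P rk bs"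
  define \<Phi> where "\<Phi> = rank_toggles P rk (as @ rk p # bs)"
  have "p \<in> \<Phi> K \<longleftrightarrow> p \<in> toggle P p (B K)" for K
    using rank_toggle_mem_near[OF fin rkd \<open>p \<in> P\<close>, of p "B K"] rank_toggles_mem_other[OF fin rkd]
      assms(5) unfolding \<Phi>_def B_def by (simp add: rank_toggles_append)
  moreover have "p \<in> B K \<longleftrightarrow> p \<in> K" for K
    unfolding B_def using rank_toggles_mem_other[OF fin rkd assms(6)] .
  ultimately have "T_plus P p (B K) - T_minus P p (B K) = of_bool (p \<in> \<Phi> K) - of_bool (p \<in> K)" for K
    using indicator_toggle_diff[of p P "B K"] by simp
  then have "(\<Sum>K\<in>Orb. T_plus P p (B K)) - (\<Sum>K\<in>Orb. T_minus P p (B K))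
      = (\<Sum>K\<in>Orb. of_bool (p \<in> \<Phi> K)) - (\<Sum>K\<in>Orb. of_bool (p \<in> K))"
    by (simp add: sum_subtractf[symmetric])
  also have "\<dots> = 0"
    using sum.reindex_bij_betw[OF perm, of "\<lambda>K. of_bool (p \<in> K)"] unfolding \<Phi>_def by simp
  finally show ?thesis unfolding B_def by simp
qed

lemma sum_T_plus_eq_sum_T_minus:
  fixes Orb :: "'a::order set set"
  assumes fin: "finite P" and rkd: "ranked P rk" and "p \<in> P"
    and Orb: "Orb \<subseteq> order_ideals P"
    and perm: "bij_betw (rank_toggles P rk (as @ rk p # bs)) Orb Orb"
    and "rk p \<notin> set as" "rk p \<notin> set bs" "set as \<inter> set bs = {}"
  shows "(\<Sum>K\<in>Orb. T_plus P p K) = (\<Sum>K\<in>Orb. T_minus P p K)"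
proof -
  define A where "A = rank_toggles P rk as"
  define B where "B = rank_toggles P rk bs"
  define \<tau> where "\<tau> = rank_toggle P rk (rk p)"
  define \<Phi> where "\<Phi> = rank_toggles P rk (as @ rk p # bs)"
  have \<Phi>: "\<Phi> K = A (\<tau> (B K))" for K
    by (simp add: \<Phi>_def A_def B_def \<tau>_def rank_toggles_append)
  have reindex: "(\<Sum>K\<in>Orb. g (\<Phi> K)) = (\<Sum>K\<in>Orb. g K)" for g :: "'a set \<Rightarrow> real"
    using sum.reindex_bij_betw[OF perm] unfolding \<Phi>_def .
  have BK: "B K \<in> order_ideals P" and \<tau>BK: "\<tau> (B K) \<in> order_ideals P" if "K \<in> Orb" for K
    using that Orb bij_betw_apply[OF bij_betw_rank_toggles[OF fin rkd]]
      bij_betw_apply[OF bij_betw_rank_toggle[OF fin rkd]] unfolding B_def \<tau>_def by blast+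
  have balance: "(\<Sum>K\<in>Orb. T_plus P p (B K)) = (\<Sum>K\<in>Orb. T_minus P p (B K))"
    unfolding B_def using sum_T_plus_eq_sum_T_minus_at_toggle[OF fin rkd \<open>p \<in> P\<close> perm assms(6,7)] .
  have "(\<Sum>K\<in>Orb. T_plus P p K) = (\<Sum>K\<in>Orb. T_plus P p (B K))"
  proof (cases "rk p - 1 \<in> set bs")
    case True
    with assms(8) have "rk p - 1 \<notin> set as" by blast
    then have "T_plus P p (\<Phi> K) = T_minus P p (B K)" if "K \<in> Orb" for K
      unfolding \<Phi> A_def \<tau>_def
      using T_plus_rank_toggles[OF fin rkd \<tau>BK[OF that, unfolded \<tau>_def] \<open>p \<in> P\<close> assms(6)]
        T_plus_rank_toggle[OF fin rkd BK[OF that] \<open>p \<in> P\<close>] by simp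
    then show ?thesis using reindex[of "T_plus P p"] balance by simp
  next
    case False
    then show ?thesis
      using T_plus_rank_toggles[OF fin rkd _ \<open>p \<in> P\<close> assms(7)] Orb unfolding B_def
      by (intro sum.cong) auto
  qed
  moreover have "(\<Sum>K\<in>Orb. T_minus P p K) = (\<Sum>K\<in>Orb. T_minus P p (B K))"
  proof (cases "rk p + 1 \<in> set bs")
    case True
    with assms(8) have "rk p + 1 \<notin> set as" by blast
    then have "T_minus P p (\<Phi> K) = T_plus P p (B K)" if "K \<in> Orb" for K
      unfolding \<Phi> A_def \<tau>_def
      using T_minus_rank_toggles[OF fin rkd \<tau>BK[OF that, unfolded \<tau>_def] \<open>p \<in> P\<close> assms(6)]
        T_minus_rank_toggle[OF fin rkd BK[OF that] \<open>p \<in> P\<close>] by simp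
    then show ?thesis using reindex[of "T_minus P p"] balance by simp
  next
    case False
    then show ?thesis
      using T_minus_rank_toggles[OF fin rkd _ \<open>p \<in> P\<close> assms(7)] Orb unfolding B_def
      by (intro sum.cong) auto
  qed
  ultimately show ?thesis using balance by simp
qed

lemma orbit_subset: "f ` A \<subseteq> A \<Longrightarrow> x \<in> A \<Longrightarrow> orbit f x \<subseteq> A"
proof -
  assume "f ` A \<subseteq> A" "x \<in> A"
  then have "(f ^^ k) x \<in> A" for k by (induction k) auto
  then show ?thesis unfolding orbit_def by blast
qed

lemma bij_betw_orbit:
  assumes "finite A" "inj_on f A" "f ` A \<subseteq> A" "x \<in> A"
  shows "bij_betw f (orbit f x) (orbit f x)"
proof -
  have sub: "orbit f x \<subseteq> A" using orbit_subset[OF assms(3,4)] .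
  have "f ((f ^^ k) x) = (f ^^ Suc k) x" for k by simp
  then have "f ` orbit f x \<subseteq> orbit f x" unfolding orbit_def by blast
  then show ?thesis
    using endo_inj_surj[OF finite_subset[OF sub assms(1)]] inj_on_subset[OF assms(2) sub]
    by (simp add: bij_betw_def)
qed

lemma expect_uniform_on:
  assumes "finite (order_ideals P)" "Orb \<subseteq> order_ideals P"
  shows "expect P (uniform_on Orb) f = (\<Sum>K\<in>Orb. f K) / card Orb"
proof -
  have "expect P (uniform_on Orb) f = (\<Sum>K\<in>Orb. uniform_on Orb K * f K)"
    unfolding expect_def using assms by (intro sum.mono_neutral_right) (auto simp: uniform_on_def)
  then show ?thesis by (simp add: uniform_on_def sum_divide_distrib)
qed

lemma distinct_split_list:
  assumes "distinct ns" "n \<in> set ns"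
  obtains as bs where "ns = as @ n # bs" "n \<notin> set as" "n \<notin> set bs" "set as \<inter> set bs = {}"
  using split_list[OF assms(2)] assms(1) by auto

theorem lemma8p5:
  fixes P :: "'a::order set" and rk :: "'a \<Rightarrow> nat" and \<sigma> :: "nat \<Rightarrow> nat"
    and r :: nat and I :: "'a set"
  assumes "finite P"
    and "poset_connected P" \<comment> \<open>not needed\<close>
    and "ranked P rk"
    and "r = Max (rk ` P)"
    and "bij_betw \<sigma> {0..r} {0..r}"
    and "I \<in> order_ideals P"
  shows "toggle_symmetric P (uniform_on (orbit (row_map P rk r \<sigma>) I))"
proof -
  define ns where "ns = map \<sigma> [0..<Suc r]"
  define Orb where "Orb = orbit (row_map P rk r \<sigma>) I"
  have img: "rank_toggles P rk ns ` order_ideals P \<subseteq> order_ideals P"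
    and inj: "inj_on (rank_toggles P rk ns) (order_ideals P)"
    using bij_betw_rank_toggles[OF assms(1,3)] by (auto simp: bij_betw_def)
  have Orb: "Orb \<subseteq> order_ideals P" "bij_betw (rank_toggles P rk ns) Orb Orb"
    unfolding Orb_def row_map_eq_rank_toggles ns_def[symmetric]
    by (fact orbit_subset[OF img assms(6)] bij_betw_orbit[OF finite_order_ideals[OF assms(1)] inj img assms(6)])+
  have "set [0..<Suc r] = {0..r}" by auto
  then have ns: "distinct ns" "set ns = {0..r}"
    using assms(5) unfolding ns_def distinct_map set_map bij_betw_def by (simp_all del: upt_Suc)
  have "(\<Sum>K\<in>Orb. T_plus P p K) = (\<Sum>K\<in>Orb. T_minus P p K)" if "p \<in> P" for p
  proof -
    have "rk p \<in> set ns" using that assms(1,4) ns(2) by simp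
    then obtain as bs where split: "ns = as @ rk p # bs"
      and "rk p \<notin> set as" "rk p \<notin> set bs" "set as \<inter> set bs = {}"
      using distinct_split_list[OF ns(1)] by blast
    with Orb(2) show ?thesis by (intro sum_T_plus_eq_sum_T_minus[OF assms(1,3) that Orb(1)]) simp_all
  qed
  then show ?thesis
    using expect_uniform_on[OF finite_order_ideals[OF assms(1)] Orb(1)]
    unfolding toggle_symmetric_def Orb_def by simp
qed

end
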